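(* Let $A$ be an $n\times n$ matrix with non-negative real entries and $\|A\|_{\max}\le 1$. Then every eigenvalue $\lambda$ of $A$ satisfies $\mathrm{Re}(\lambda) \ge -n/2$.
   Context: $\|A\|_{\max}$ denotes the largest absolute value of an entry of $A$. *)

theory Defs
  imports "Jordan_Normal_Form.Jordan_Normal_Form"
begin

end

theory Submission
  imports Defs "HOL-Analysis.Convex"
begin

text \<open>
  If \<open>A v = \<lambda> v\<close> with \<open>v = x + i y\<close>, then \<open>Re \<lambda> \<parallel>v\<parallel>\<^sup>2 = x\<^sup>T A x + y\<^sup>T A y\<close>.
  For a real quadratic form with entries in \<open>[0, 1]\<close> each term satisfies
  \<open>a\<^sub>i\<^sub>j x\<^sub>i x\<^sub>j \<ge> min 0 (x\<^sub>i x\<^sub>j)\<close>, and summing gives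
  \<open>x\<^sup>T A x \<ge> ((\<Sum> x\<^sub>i)\<^sup>2 - (\<Sum> \<bar>x\<^sub>i\<bar>)\<^sup>2) / 2 \<ge> -(\<Sum> \<bar>x\<^sub>i\<bar>)\<^sup>2 / 2 \<ge> -n \<parallel>x\<parallel>\<^sup>2 / 2\<close>
  by Cauchy--Schwarz.
\<close>

lemma min_zero_le_mult_unit_interval:
  fixes a t :: real
  assumes "0 \<le> a" and "a \<le> 1"
  shows "min 0 t \<le> a * t"
proof (cases "t \<ge> 0")
  case True
  then show ?thesis using assms(1) by simp
next
  case False
  then have "1 * t \<le> a * t" using assms(2) by (intro mult_right_mono_neg) auto
  then show ?thesis by simp
qed

lemma sum_sum_min_zero_mult:
  fixes x :: "'i \<Rightarrow> real"
  shows "(\<Sum>i\<in>I. \<Sum>j\<in>I. min 0 (x i * x j)) = ((\<Sum>i\<in>I. x i)\<^sup>2 - (\<Sum>i\<in>I. \<bar>x i\<bar>)\<^sup>2) / 2"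
proof -
  have "min 0 t = (t - \<bar>t\<bar>) / 2" for t :: real
    by (simp add: min_def)
  then show ?thesis
    by (simp add: abs_mult power2_eq_square sum_product sum_subtractf
        diff_divide_distrib sum_divide_distrib)
qed

lemma quadratic_form_unit_interval_ge:
  fixes a :: "'i \<Rightarrow> 'i \<Rightarrow> real" and x :: "'i \<Rightarrow> real"
  assumes "\<And>i j. i \<in> I \<Longrightarrow> j \<in> I \<Longrightarrow> 0 \<le> a i j"
    and "\<And>i j. i \<in> I \<Longrightarrow> j \<in> I \<Longrightarrow> a i j \<le> 1"
  shows "- (real (card I) / 2) * (\<Sum>i\<in>I. (x i)\<^sup>2) \<le> (\<Sum>i\<in>I. \<Sum>j\<in>I. a i j * (x i * x j))"
proof -
  have "- (real (card I) / 2) * (\<Sum>i\<in>I. (x i)\<^sup>2) \<le> - (\<Sum>i\<in>I. \<bar>x i\<bar>)\<^sup>2 / 2"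
    using sum_squared_le_sum_of_squares[of "\<lambda>i. \<bar>x i\<bar>" I] by (simp add: mult.commute)
  also have "\<dots> \<le> ((\<Sum>i\<in>I. x i)\<^sup>2 - (\<Sum>i\<in>I. \<bar>x i\<bar>)\<^sup>2) / 2"
    by (simp add: divide_right_mono)
  also have "\<dots> = (\<Sum>i\<in>I. \<Sum>j\<in>I. min 0 (x i * x j))"
    by (rule sum_sum_min_zero_mult[symmetric])
  also have "\<dots> \<le> (\<Sum>i\<in>I. \<Sum>j\<in>I. a i j * (x i * x j))"
    by (intro sum_mono min_zero_le_mult_unit_interval assms)
  finally show ?thesis .
qed

lemma Re_hermitian_form_real_coefficients:
  fixes a :: "'i \<Rightarrow> 'i \<Rightarrow> real" and v :: "'i \<Rightarrow> complex"
  shows "Re (\<Sum>i\<in>I. \<Sum>j\<in>I. cnj (v i) * complex_of_real (a i j) * v j)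
    = (\<Sum>i\<in>I. \<Sum>j\<in>I. a i j * (Re (v i) * Re (v j)))
    + (\<Sum>i\<in>I. \<Sum>j\<in>I. a i j * (Im (v i) * Im (v j)))"
  by (simp add: Re_sum sum.distrib[symmetric] algebra_simps)

lemma eigenvector_hermitian_form:
  fixes M :: "complex mat"
  assumes "M \<in> carrier_mat n n" and "eigenvector M v lam"
  shows "(\<Sum>i<n. \<Sum>j<n. cnj (v $ i) * M $$ (i, j) * v $ j)
    = lam * complex_of_real (\<Sum>i<n. (cmod (v $ i))\<^sup>2)"
proof -
  have v: "v \<in> carrier_vec n" and Mv: "M *\<^sub>v v = lam \<cdot>\<^sub>v v"
    using assms unfolding eigenvector_def by auto
  have row: "(\<Sum>j<n. M $$ (i, j) * v $ j) = lam * v $ i" if "i < n" for i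
  proof -
    have "(M *\<^sub>v v) $ i = (lam \<cdot>\<^sub>v v) $ i" using Mv by simp
    then show ?thesis
      using that assms(1) v by (simp add: mult_mat_vec_def scalar_prod_def atLeast0LessThan)
  qed
  have "(\<Sum>i<n. \<Sum>j<n. cnj (v $ i) * M $$ (i, j) * v $ j) = (\<Sum>i<n. lam * (cnj (v $ i) * v $ i))"
    by (intro sum.cong refl) (simp add: row mult.assoc flip: sum_distrib_left)
  also have "\<dots> = lam * complex_of_real (\<Sum>i<n. (cmod (v $ i))\<^sup>2)"
    unfolding of_real_sum complex_norm_square by (simp add: sum_distrib_left mult.commute)
  finally show ?thesis .
qed

lemma sum_cmod_squared_pos:
  assumes "v \<in> carrier_vec n" and "v \<noteq> 0\<^sub>v n"
  shows "0 < (\<Sum>i<n. (cmod (v $ i))\<^sup>2)"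
proof -
  obtain i where "i < n" and "v $ i \<noteq> 0"
    using assms by (metis carrier_vecD eq_vecI index_zero_vec)
  then show ?thesis
    by (intro sum_pos2[of _ i]) auto
qed

lemma Re_eigenvalue_real_matrix:
  fixes A :: "real mat"
  assumes "A \<in> carrier_mat n n" and "eigenvector (map_mat complex_of_real A) v lam"
  shows "Re lam * (\<Sum>i<n. (cmod (v $ i))\<^sup>2)
    = (\<Sum>i<n. \<Sum>j<n. A $$ (i, j) * (Re (v $ i) * Re (v $ j)))
    + (\<Sum>i<n. \<Sum>j<n. A $$ (i, j) * (Im (v $ i) * Im (v $ j)))"
proof -
  let ?S = "\<Sum>i<n. (cmod (v $ i))\<^sup>2"
  have "lam * complex_of_real ?S
      = (\<Sum>i<n. \<Sum>j<n. cnj (v $ i) * map_mat complex_of_real A $$ (i, j) * v $ j)"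
    using eigenvector_hermitian_form[of _ n, OF _ assms(2)] assms(1) by simp
  also have "\<dots> = (\<Sum>i<n. \<Sum>j<n. cnj (v $ i) * complex_of_real (A $$ (i, j)) * v $ j)"
    using assms(1) by (auto intro!: sum.cong)
  finally have "Re (lam * complex_of_real ?S)
      = Re (\<Sum>i<n. \<Sum>j<n. cnj (v $ i) * complex_of_real (A $$ (i, j)) * v $ j)"
    by (rule arg_cong)
  then show ?thesis
    unfolding Re_hermitian_form_real_coefficients by simp
qed

theorem lemma6:
  fixes A :: "real mat" and n :: nat and lam :: complex
  assumes "A \<in> carrier_mat n n"
    and "\<And>i j. i < n \<Longrightarrow> j < n \<Longrightarrow> 0 \<le> A $$ (i, j)"
    and "\<And>i j. i < n \<Longrightarrow> j < n \<Longrightarrow> \<bar>A $$ (i, j)\<bar> \<le> 1"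
    and "eigenvalue (map_mat complex_of_real A) lam"
  shows "Re lam \<ge> - (real n / 2)"
proof -
  let ?Q = "\<lambda>x. \<Sum>i<n. \<Sum>j<n. A $$ (i, j) * (x i * x j)"
  obtain v where v: "eigenvector (map_mat complex_of_real A) v lam"
    using assms(4) unfolding eigenvalue_def by blast
  define x y where "x i = Re (v $ i)" and "y i = Im (v $ i)" for i
  define S where "S = (\<Sum>i<n. (cmod (v $ i))\<^sup>2)"
  have "S > 0"
    using v assms(1) unfolding S_def eigenvector_def by (intro sum_cmod_squared_pos) auto
  have eigen: "Re lam * S = ?Q x + ?Q y"
    using Re_eigenvalue_real_matrix[OF assms(1) v] unfolding S_def x_def y_def .
  have lower: "- (real n / 2) * (\<Sum>i<n. (z i)\<^sup>2) \<le> ?Q z" for z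
    using quadratic_form_unit_interval_ge[of "{..<n}" "\<lambda>i j. A $$ (i, j)" z] assms(2,3)
    by (simp add: abs_le_iff)
  have "- (real n / 2) * S = - (real n / 2) * (\<Sum>i<n. (x i)\<^sup>2) + - (real n / 2) * (\<Sum>i<n. (y i)\<^sup>2)"
    unfolding S_def x_def y_def by (simp add: cmod_power2 sum.distrib algebra_simps)
  also have "\<dots> \<le> Re lam * S"
    unfolding eigen by (intro add_mono lower)
  finally show ?thesis
    using \<open>S > 0\<close> by (rule mult_right_le_imp_le)
qed

end
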